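(* The generating series $f(q;x)=\sum_\gamma q^{\omega_{HU}(\gamma)+\omega_{DH}(\gamma)+\omega_{DU}(\gamma)+\omega_{HH}(\gamma)}x^{|\gamma|}$, where $\gamma$ ranges over all Motzkin paths and $|\gamma|$ is the length, is $$f(q;x)=\frac{1-qx-(1-q)x^2-\sqrt{(1+x)\big(1-(1+2q)x-(1-q^2)x^2+(1-q)^2x^3\big)}}{2qx^2}.$$
   Context: Steps: $U=(1,1)$, $D=(1,-1)$, $H=(1,0)$. A Motzkin path of length $n$ is a lattice path from $(0,0)$ to $(n,0)$ with steps $U,D,H$ never going below the $x$-axis. Paths are identified with words of steps, and $\omega_\alpha(\gamma)$ is the number of occurrences of the word $\alpha$ as a factor (contiguous subword, overlapping occurrences counted separately) of $\gamma$. *)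

theory Defs
  imports Complex_Main "HOL-Computational_Algebra.Formal_Power_Series"
begin

datatype step = U | D | H

fun height :: "step \<Rightarrow> int" where
  "height U = 1" | "height D = -1" | "height H = 0"

definition motzkin :: "step list \<Rightarrow> bool" where
  "motzkin \<gamma> \<longleftrightarrow>
     (\<forall>k\<le>length \<gamma>. 0 \<le> sum_list (map height (take k \<gamma>))) \<and>
     sum_list (map height \<gamma>) = 0"

definition occ :: "step list \<Rightarrow> step list \<Rightarrow> nat" where
  "occ \<alpha> \<gamma> = card {i. i + length \<alpha> \<le> length \<gamma> \<and> take (length \<alpha>) (drop i \<gamma>) = \<alpha>}"

definition stat :: "step list \<Rightarrow> nat" where
  "stat \<gamma> = occ [H,U] \<gamma> + occ [D,H] \<gamma> + occ [D,U] \<gamma> + occ [H,H] \<gamma>"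

definition motz_gf :: "real \<Rightarrow> real fps" where
  "motz_gf q = Abs_fps (\<lambda>n. \<Sum>\<gamma>\<in>{\<gamma>. length \<gamma> = n \<and> motzkin \<gamma>}. q ^ stat \<gamma>)"

text \<open>Formal square root of a power series with constant term 1 (principal branch).\<close>
definition fps_sqrt :: "real fps \<Rightarrow> real fps" where
  "fps_sqrt a = fps_radical (\<lambda>k x. root k x) 2 a"

end

theory Submission imports Defs begin

(* The statistic stat counts the consecutive step pairs HU, DH, DU, HH; we call
   these pairs "marked" and count them by a simple recursion.  A Motzkin path is either empty,
   or H followed by a Motzkin path, or U followed by a path from height 1 down to 0; the
   latter splits uniquely at its first return as  alpha @ D # beta  with alpha, beta Motzkin.
   Tracking the marked pairs created at the junctions (H or D followed by a nonempty Motzkin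
   path always creates one) gives, with F = motz_gf q and G = q F + 1 - q, the functional
   equation  F = 1 + x G + x^2 F G.  Completing the square, S = 1 - qx - (1-q)x^2 - 2qx^2 F
   satisfies S^2 = (1+x)(1 - (1+2q)x - (1-q^2)x^2 + (1-q)^2 x^3), and since S has constant
   term 1 it is the principal square root of the right-hand side. *)

fun marked :: "step \<Rightarrow> step \<Rightarrow> bool" where
  "marked H U = True" | "marked D H = True" | "marked D U = True" | "marked H H = True"
| "marked _ _ = False"

fun marked_pairs :: "step list \<Rightarrow> nat" where
  "marked_pairs (a # b # w) = (if marked a b then 1 else 0) + marked_pairs (b # w)"
| "marked_pairs _ = 0"

lemma occ_positions_Cons:
  assumes "\<alpha> \<noteq> []"
  shows "{i. i + length \<alpha> \<le> length (x # w) \<and> take (length \<alpha>) (drop i (x # w)) = \<alpha>}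
   = (if length \<alpha> \<le> Suc (length w) \<and> take (length \<alpha>) (x # w) = \<alpha> then {0} else {})
     \<union> Suc ` {i. i + length \<alpha> \<le> length w \<and> take (length \<alpha>) (drop i w) = \<alpha>}"
  (is "?L = ?R")
proof (rule set_eqI)
  fix i show "i \<in> ?L \<longleftrightarrow> i \<in> ?R"
    by (cases i) (auto simp: image_iff)
qed

lemma occ_Cons:
  assumes "\<alpha> \<noteq> []"
  shows "occ \<alpha> (x # w) =
    (if length \<alpha> \<le> Suc (length w) \<and> take (length \<alpha>) (x # w) = \<alpha> then 1 else 0) + occ \<alpha> w"
  unfolding occ_def occ_positions_Cons[OF assms]
  by (subst card_Un_disjoint)
     (auto intro!: finite_imageI finite_subset[of _ "{..length w}"] simp: card_image)

lemma occ_Nil: "\<alpha> \<noteq> [] \<Longrightarrow> occ \<alpha> [] = 0"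
  unfolding occ_def by auto

lemma occ_pair_Cons_Cons:
  "occ [x, y] (a # b # w) = (if a = x \<and> b = y then 1 else 0) + occ [x, y] (b # w)"
  by (subst occ_Cons) auto

lemma stat_eq_marked_pairs: "stat w = marked_pairs w"
proof (induction w rule: marked_pairs.induct)
  case (1 a b w)
  then show ?case
    unfolding stat_def occ_pair_Cons_Cons by (cases a; cases b; simp)
next
  case "2_1" then show ?case by (simp add: stat_def occ_Nil)
next
  case ("2_2" v) then show ?case by (simp add: stat_def occ_Cons occ_Nil)
qed

lemma marked_pairs_append:
  "marked_pairs (xs @ ys) = marked_pairs xs + marked_pairs ys +
     (if xs \<noteq> [] \<and> ys \<noteq> [] \<and> marked (last xs) (hd ys) then 1 else 0)"
proof (induction xs rule: marked_pairs.induct)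
  case ("2_2" v) then show ?case by (cases ys) auto
qed simp_all

fun motzkin_from :: "int \<Rightarrow> step list \<Rightarrow> bool" where
  "motzkin_from h [] \<longleftrightarrow> h = 0"
| "motzkin_from h (a # w) \<longleftrightarrow> 0 \<le> h + height a \<and> motzkin_from (h + height a) w"

lemma all_le_Suc_iff: "(\<forall>k\<le>Suc n. P k) \<longleftrightarrow> P 0 \<and> (\<forall>k\<le>n. P (Suc k))"
  by (metis Suc_le_mono le0 not0_implies_Suc)

lemma motzkin_from_iff_prefix_sums:
  "((\<forall>k\<le>length w. 0 \<le> h + sum_list (map height (take k w))) \<and>
     h + sum_list (map height w) = 0) \<longleftrightarrow> 0 \<le> h \<and> motzkin_from h w"
proof (induction w arbitrary: h)
  case Nil then show ?case by auto
next
  case (Cons a w)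
  have "((\<forall>k\<le>length (a # w). 0 \<le> h + sum_list (map height (take k (a # w)))) \<and>
          h + sum_list (map height (a # w)) = 0) \<longleftrightarrow> 0 \<le> h \<and>
        ((\<forall>k\<le>length w. 0 \<le> (h + height a) + sum_list (map height (take k w))) \<and>
          (h + height a) + sum_list (map height w) = 0)"
    by (simp only: length_Cons all_le_Suc_iff) (simp add: add.assoc)
  also have "\<dots> \<longleftrightarrow> 0 \<le> h \<and> motzkin_from h (a # w)" using Cons by auto
  finally show ?case .
qed

lemma motzkin_iff: "motzkin w \<longleftrightarrow> motzkin_from 0 w"
  using motzkin_from_iff_prefix_sums[of w 0] unfolding motzkin_def by simp

lemma motzkin_from_append:
  "motzkin_from k \<alpha> \<Longrightarrow> 0 \<le> h \<Longrightarrow> motzkin_from (h + k) (\<alpha> @ ys) = motzkin_from h ys"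
  by (induction \<alpha> arbitrary: k) (simp_all add: add.assoc)

lemma motzkin_hd_not_D: "motzkin_from 0 w \<Longrightarrow> w \<noteq> [] \<Longrightarrow> hd w \<noteq> D"
  by (cases w) auto

lemma motzkin_lift: "motzkin_from 0 \<alpha> \<Longrightarrow> motzkin_from 0 \<beta> \<Longrightarrow> motzkin_from 0 (U # \<alpha> @ D # \<beta>)"
  using motzkin_from_append[of 0 \<alpha> 1 "D # \<beta>"] by simp

lemma first_passage:
  "motzkin_from (h + 1) w \<Longrightarrow> 0 \<le> h \<Longrightarrow>
   \<exists>\<alpha> \<beta>. w = \<alpha> @ D # \<beta> \<and> motzkin_from 0 \<alpha> \<and> motzkin_from h \<beta>"
proof (induction "length w" arbitrary: w h rule: less_induct)
  case less
  show ?case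
  proof (cases w)
    case Nil then show ?thesis using less by simp
  next
    case (Cons a w')
    show ?thesis
    proof (cases a)
      case D then show ?thesis using less Cons by (intro exI[of _ "[]"] exI[of _ w']) auto
    next
      case H
      obtain \<alpha> \<beta> where "w' = \<alpha> @ D # \<beta>" "motzkin_from 0 \<alpha>" "motzkin_from h \<beta>"
        using less H Cons by force
      then show ?thesis using Cons H by (intro exI[of _ "H # \<alpha>"] exI[of _ \<beta>]) auto
    next
      case U
      text \<open>From height h + 2 the path first reaches h + 1, then h.\<close>
      obtain \<alpha>1 \<beta>1 where 1: "w' = \<alpha>1 @ D # \<beta>1" "motzkin_from 0 \<alpha>1" "motzkin_from (h + 1) \<beta>1"
        using less(1)[of w' "h + 1"] less(2,3) U Cons by (auto simp: add.assoc)
      obtain \<alpha>2 \<beta>2 where 2: "\<beta>1 = \<alpha>2 @ D # \<beta>2" "motzkin_from 0 \<alpha>2" "motzkin_from h \<beta>2"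
        using less(1)[OF _ 1(3) less(3)] Cons 1(1) by auto
      show ?thesis using Cons U 1 2 motzkin_lift
        by (intro exI[of _ "U # \<alpha>1 @ D # \<alpha>2"] exI[of _ \<beta>2]) auto
    qed
  qed
qed

lemma first_passage_unique:
  "motzkin_from k \<alpha> \<Longrightarrow> motzkin_from k \<alpha>' \<Longrightarrow> \<alpha> @ D # \<beta> = \<alpha>' @ D # \<beta>' \<Longrightarrow> \<alpha> = \<alpha>'"
proof (induction \<alpha> arbitrary: \<alpha>' k)
  case Nil then show ?case by (cases \<alpha>') auto
next
  case (Cons a \<alpha>) then show ?case by (cases \<alpha>') auto
qed

definition motzkin_paths :: "nat \<Rightarrow> step list set" where
  "motzkin_paths n = {\<gamma>. length \<gamma> = n \<and> motzkin_from 0 \<gamma>}"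

definition lifted_paths :: "nat \<Rightarrow> step list set" where
  "lifted_paths n = {w. length w = n \<and> motzkin_from 1 w}"

lemma finite_UNIV_step: "finite (UNIV :: step set)"
proof -
  have "(UNIV :: step set) = {U, D, H}" by (auto intro: step.exhaust)
  then show ?thesis by (metis finite.emptyI finite_insert)
qed

lemma finite_motzkin_paths: "finite (motzkin_paths n)"
  unfolding motzkin_paths_def
  by (rule finite_subset[OF _ finite_lists_length_eq[OF finite_UNIV_step, of n]]) auto

lemma motzkin_paths_0: "motzkin_paths 0 = {[]}"
  unfolding motzkin_paths_def by auto

lemma motzkin_paths_Suc:
  "motzkin_paths (Suc n) = Cons H ` motzkin_paths n \<union> Cons U ` lifted_paths n"
proof (rule set_eqI)
  fix w show "w \<in> motzkin_paths (Suc n) \<longleftrightarrow> w \<in> Cons H ` motzkin_paths n \<union> Cons U ` lifted_paths n"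
    by (cases w; cases "hd w") (auto simp: motzkin_paths_def lifted_paths_def)
qed

definition first_passage_pairs :: "nat \<Rightarrow> (nat \<times> step list \<times> step list) set" where
  "first_passage_pairs n = (SIGMA i:{..<n}. motzkin_paths i \<times> motzkin_paths (n - 1 - i))"

definition join_at_D :: "nat \<times> step list \<times> step list \<Rightarrow> step list" where
  "join_at_D = (\<lambda>(i, \<alpha>, \<beta>). \<alpha> @ D # \<beta>)"

lemma lifted_paths_eq: "lifted_paths n = join_at_D ` first_passage_pairs n"
proof (rule set_eqI)
  fix w
  show "w \<in> lifted_paths n \<longleftrightarrow> w \<in> join_at_D ` first_passage_pairs n"
  proof
    assume w: "w \<in> lifted_paths n"
    then obtain \<alpha> \<beta> where "w = \<alpha> @ D # \<beta>" "motzkin_from 0 \<alpha>" "motzkin_from 0 \<beta>"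
      using first_passage[of 0 w] by (auto simp: lifted_paths_def)
    then show "w \<in> join_at_D ` first_passage_pairs n"
      using w by (intro image_eqI[of _ _ "(length \<alpha>, \<alpha>, \<beta>)"])
        (auto simp: lifted_paths_def motzkin_paths_def first_passage_pairs_def join_at_D_def)
  next
    assume "w \<in> join_at_D ` first_passage_pairs n"
    then show "w \<in> lifted_paths n"
      using motzkin_from_append[of 0 _ 1 "D # _"]
      by (auto simp: motzkin_paths_def lifted_paths_def first_passage_pairs_def join_at_D_def)
  qed
qed

lemma inj_on_join_at_D: "inj_on join_at_D (first_passage_pairs n)"
proof (rule inj_onI)
  fix x y assume "x \<in> first_passage_pairs n" "y \<in> first_passage_pairs n"
    and "join_at_D x = join_at_D y"
  then show "x = y"
    using first_passage_unique[of 0]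
    by (auto simp: first_passage_pairs_def motzkin_paths_def join_at_D_def)
qed

text \<open>Total weight of Motzkin paths of length n, and the weight they carry when preceded by
  a step H or D (which creates one more marked pair unless the path is empty).\<close>
definition weight :: "real \<Rightarrow> nat \<Rightarrow> real" where
  "weight q n = (\<Sum>\<gamma>\<in>motzkin_paths n. q ^ marked_pairs \<gamma>)"

definition tail_weight :: "real \<Rightarrow> nat \<Rightarrow> real" where
  "tail_weight q n = (\<Sum>\<gamma>\<in>motzkin_paths n. q ^ (marked_pairs \<gamma> + (if \<gamma> = [] then 0 else 1)))"

lemma motz_gf_nth: "fps_nth (motz_gf q) n = weight q n"
  unfolding motz_gf_def weight_def motzkin_paths_def
  by (simp add: stat_eq_marked_pairs motzkin_iff)

lemma weight_0: "weight q 0 = 1"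
  by (simp add: weight_def motzkin_paths_0)

lemma tail_weight_eq: "tail_weight q n = q * weight q n + (if n = 0 then 1 - q else 0)"
proof (cases n)
  case 0 then show ?thesis by (simp add: tail_weight_def weight_def motzkin_paths_0)
next
  case (Suc m)
  have "tail_weight q n = (\<Sum>\<gamma>\<in>motzkin_paths n. q * q ^ marked_pairs \<gamma>)"
    unfolding tail_weight_def by (rule sum.cong) (auto simp: motzkin_paths_def Suc)
  then show ?thesis by (simp add: weight_def sum_distrib_left Suc)
qed

lemma marked_pairs_U_Cons: "marked_pairs (U # w) = marked_pairs w"
  by (cases w) auto

lemma marked_pairs_H_Cons:
  "motzkin_from 0 \<gamma> \<Longrightarrow> marked_pairs (H # \<gamma>) = marked_pairs \<gamma> + (if \<gamma> = [] then 0 else 1)"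
  by (cases \<gamma>; cases "hd \<gamma>") auto

lemma marked_pairs_join_at_D:
  assumes "motzkin_from 0 \<beta>"
  shows "marked_pairs (\<alpha> @ D # \<beta>) = marked_pairs \<alpha> + (marked_pairs \<beta> + (if \<beta> = [] then 0 else 1))"
proof -
  have "marked_pairs (\<alpha> @ [D]) = marked_pairs \<alpha>"
    using marked_pairs_append[of \<alpha> "[D]"] by (cases "last \<alpha>") auto
  moreover have "marked D (hd \<beta>)" if "\<beta> \<noteq> []"
    using motzkin_hd_not_D[OF assms that] by (cases "hd \<beta>") auto
  ultimately show ?thesis
    using marked_pairs_append[of "\<alpha> @ [D]" \<beta>] by auto
qed

lemma weight_Suc:
  "weight q (Suc n) = tail_weight q n + (\<Sum>i<n. weight q i * tail_weight q (n - 1 - i))"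
proof -
  have finite_lifted: "finite (lifted_paths n)"
    by (auto simp: lifted_paths_eq first_passage_pairs_def finite_motzkin_paths)
  have "weight q (Suc n) = (\<Sum>\<gamma>\<in>Cons H ` motzkin_paths n. q ^ marked_pairs \<gamma>)
                         + (\<Sum>\<gamma>\<in>Cons U ` lifted_paths n. q ^ marked_pairs \<gamma>)"
    unfolding weight_def motzkin_paths_Suc
    by (rule sum.union_disjoint) (auto simp: finite_motzkin_paths finite_lifted)
  also have "(\<Sum>\<gamma>\<in>Cons H ` motzkin_paths n. q ^ marked_pairs \<gamma>) = tail_weight q n"
    by (subst sum.reindex)
       (auto simp: tail_weight_def marked_pairs_H_Cons motzkin_paths_def intro!: sum.cong)
  also have "(\<Sum>\<gamma>\<in>Cons U ` lifted_paths n. q ^ marked_pairs \<gamma>)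
           = (\<Sum>x\<in>first_passage_pairs n. q ^ marked_pairs (join_at_D x))"
    by (simp add: sum.reindex marked_pairs_U_Cons lifted_paths_eq inj_on_join_at_D)
  also have "\<dots> = (\<Sum>(i, p)\<in>first_passage_pairs n.
        q ^ marked_pairs (fst p) * q ^ (marked_pairs (snd p) + (if snd p = [] then 0 else 1)))"
    by (rule sum.cong) (auto simp: first_passage_pairs_def motzkin_paths_def join_at_D_def
        marked_pairs_join_at_D power_add)
  also have "\<dots> = (\<Sum>i<n. \<Sum>p\<in>motzkin_paths i \<times> motzkin_paths (n - 1 - i).
        q ^ marked_pairs (fst p) * q ^ (marked_pairs (snd p) + (if snd p = [] then 0 else 1)))"
    unfolding first_passage_pairs_def by (rule sum.Sigma[symmetric]) (auto simp: finite_motzkin_paths)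
  also have "\<dots> = (\<Sum>i<n. weight q i * tail_weight q (n - 1 - i))"
    unfolding weight_def tail_weight_def sum_product sum.cartesian_product
    by (simp add: case_prod_beta)
  finally show ?thesis .
qed

lemma motz_gf_functional_equation:
  fixes q :: real
  defines "F \<equiv> motz_gf q" and "G \<equiv> fps_const q * motz_gf q + 1 - fps_const q"
  shows "F = 1 + fps_X * G + fps_X ^ 2 * F * G"
proof (rule fps_ext)
  fix n
  have G_nth: "fps_nth G k = tail_weight q k" for k
    by (simp add: tail_weight_eq motz_gf_nth G_def)
  have F_nth: "fps_nth F k = weight q k" for k
    by (simp add: F_def motz_gf_nth)
  have conv: "fps_nth (fps_X * (F * G)) m = (\<Sum>i<m. weight q i * tail_weight q (m - 1 - i))" for m
  proof (cases m)
    case (Suc k)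
    have "fps_nth (F * G) k = (\<Sum>i=0..k. fps_nth F i * fps_nth G (k - i))"
      by (rule fps_mult_nth)
    moreover have "{0..k} = {..<Suc k}" by auto
    ultimately show ?thesis using Suc by (simp add: G_nth F_nth)
  qed simp
  show "fps_nth F n = fps_nth (1 + fps_X * G + fps_X ^ 2 * F * G) n"
    using conv[of "n - 1"]
    by (cases n) (simp_all add: G_nth F_nth weight_0 weight_Suc power2_eq_square mult.assoc)
qed

text \<open>Completing the square in  F = 1 + X G + X^2 F G  with  G = Q F + 1 - Q, valid in every
  commutative ring: the difference of the two sides is 4 Q X^2 times the defect of the equation.\<close>
lemma completed_square:
  fixes Q X F :: "'a :: comm_ring_1"
  assumes "F = 1 + X * (Q * F + 1 - Q) + X ^ 2 * F * (Q * F + 1 - Q)"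
  shows "(1 - Q * X - (1 - Q) * X ^ 2 - 2 * Q * X ^ 2 * F) ^ 2 =
         (1 + X) * (1 - (1 + 2 * Q) * X - (1 - Q ^ 2) * X ^ 2 + (1 - Q) ^ 2 * X ^ 3)"
proof -
  have "(1 - Q * X - (1 - Q) * X ^ 2 - 2 * Q * X ^ 2 * F) ^ 2 -
         (1 + X) * (1 - (1 + 2 * Q) * X - (1 - Q ^ 2) * X ^ 2 + (1 - Q) ^ 2 * X ^ 3)
       = 4 * Q * X ^ 2 * (1 + X * (Q * F + 1 - Q) + X ^ 2 * F * (Q * F + 1 - Q) - F)"
    by (simp add: algebra_simps power2_eq_square power3_eq_cube)
  then show ?thesis using assms by simp
qed

lemma fps_sqrt_square:
  assumes "fps_nth S 0 = 1"
  shows "fps_sqrt (S ^ 2) = S"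
proof -
  have "S ^ Suc 1 = S ^ 2 \<longleftrightarrow> S = fps_radical (\<lambda>k x. root k x) (Suc 1) (S ^ 2)"
    by (rule radical_unique) (simp_all add: assms power2_eq_square)
  then show ?thesis
    unfolding fps_sqrt_def by (simp add: numeral_2_eq_2)
qed

theorem mainTheorem7:
  fixes q :: real
  shows "fps_const (2 * q) * fps_X ^ 2 * motz_gf q =
    1 - fps_const q * fps_X - fps_const (1 - q) * fps_X ^ 2
    - fps_sqrt ((1 + fps_X) *
        (1 - fps_const (1 + 2 * q) * fps_X - fps_const (1 - q ^ 2) * fps_X ^ 2
           + fps_const ((1 - q) ^ 2) * fps_X ^ 3))"
proof -
  define Q :: "real fps" where "Q = fps_const q"
  define S where "S = 1 - Q * fps_X - (1 - Q) * fps_X ^ 2 - 2 * Q * fps_X ^ 2 * motz_gf q"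
  have const_forms: "fps_const (2 * q) = 2 * Q" "fps_const (1 - q) = 1 - Q"
    "fps_const (1 + 2 * q) = 1 + 2 * Q" "fps_const (1 - q ^ 2) = 1 - Q ^ 2"
    "fps_const ((1 - q) ^ 2) = (1 - Q) ^ 2"
    unfolding Q_def
    by (simp_all add: numeral_fps_const power2_eq_square
        flip: fps_const_1_eq_1 fps_const_sub fps_const_add fps_const_mult)
  have "S ^ 2 = (1 + fps_X) * (1 - (1 + 2 * Q) * fps_X - (1 - Q ^ 2) * fps_X ^ 2
                               + (1 - Q) ^ 2 * fps_X ^ 3)"
    unfolding S_def
    by (rule completed_square) (use motz_gf_functional_equation[of q] in \<open>simp add: Q_def\<close>)
  moreover have "fps_nth S 0 = 1" by (simp add: S_def Q_def)
  ultimately have sqrt_eq: "fps_sqrt ((1 + fps_X) * (1 - (1 + 2 * Q) * fps_X - (1 - Q ^ 2) * fps_X ^ 2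
                               + (1 - Q) ^ 2 * fps_X ^ 3)) = S"
    using fps_sqrt_square by metis
  then show ?thesis
    unfolding const_forms Q_def[symmetric] sqrt_eq S_def by (simp add: algebra_simps)
qed

end
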